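(* Let $k\ge1$, let $q_1,\dots,q_k$ be integers and $h_{i,j}$ ($1\le i\le k$, $j\in\{0,1\}$) integers. Let $H(t)\in\mathbb Q(t)$ with $H\not\equiv0\pmod p$, where $p$ is a prime with $p\ge k+\deg H$, $p\nmid q_1\cdots q_k$, and such that if $H(t)$ reduces to a polynomial modulo $p$ then $\deg_p H\ge k$. Define $$H^+(t):=\sum_{j_1,\dots,j_k\in\{0,1\}}(-1)^{j_1+\cdots+j_k}H(t+h_{1,j_1}q_1+\cdots+h_{k,j_k}q_k).$$ Then $$v_p\big(H^+(t)\big)=\sum_{i=1}^k v_p(h_{i,1}-h_{i,0})=:v_p(\mathbf h).$$ Moreover, assuming that if $H(t)$ reduces to a polynomial modulo $p$ then $\deg_p H>k$, for any integer $b$ we have $$v_p\big(H^+(t)+b\big)=\min\{v_p(\mathbf h),v_p(b)\}.$$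
   Context: For $R\in\mathbb Q(t)$ write $R=R_+/R_-$ with $R_\pm\in\mathbb Z[t]$ coprime; $\deg R=\max(\deg R_+,\deg R_-)$ and $\deg_p R$ is the degree of the reduction modulo $p$. For a rational number $r=p^e a/b$ with $p\nmid ab$, $v_p(r)=e$, and $v_p(0)=\infty$. For a nonzero rational function $R$, $v_p(R)$ is the integer $e$ such that $R=p^eR_0$ with $R_0\in\mathbb Q(t)$ having $p$-integral reduction not identically $0$ modulo $p$ (i.e. $R_0\not\equiv0\pmod p$); $v_p(0)=\infty$. *)

theory Defs
  imports "HOL-Computational_Algebra.Computational_Algebra" "HOL-Library.Extended_Real" "HOL-Library.FuncSet"
begin

type_synonym ratfun = "rat poly fract"

definition ratfun_of :: "int poly \<Rightarrow> int poly \<Rightarrow> ratfun" where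
  "ratfun_of A B = Fract (map_poly of_int A) (map_poly of_int B)"

definition nonzero_mod :: "nat \<Rightarrow> int poly \<Rightarrow> bool" where
  "nonzero_mod p A \<longleftrightarrow> (\<exists>i. \<not> int p dvd coeff A i)"

definition vp_rat :: "nat \<Rightarrow> rat \<Rightarrow> ereal" where
  "vp_rat p r = (if r = 0 then \<infinity> else
     ereal (of_int (THE e::int. \<exists>a b::int. \<not> int p dvd a \<and> \<not> int p dvd b \<and>
        r = (of_nat p) powi e * (of_int a / of_int b))))"

text \<open>p-adic valuation of a rational function: R = p^e R_0 with R_0 p-integral and
  with reduction not identically 0 mod p, i.e. R_0 = A/B with A, B integer polynomials
  both not identically 0 mod p.\<close>
definition vp_ratfun :: "nat \<Rightarrow> ratfun \<Rightarrow> ereal" where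
  "vp_ratfun p R = (if R = 0 then \<infinity> else
     ereal (of_int (THE e::int. \<exists>A B::int poly. nonzero_mod p A \<and> nonzero_mod p B \<and>
        R = Fract [:(of_nat p) powi e:] 1 * ratfun_of A B)))"

text \<open>Degree of a rational function given in lowest terms R_+/R_-.\<close>
definition deg_ratfun :: "int poly \<Rightarrow> int poly \<Rightarrow> nat" where
  "deg_ratfun Rp Rm = max (degree Rp) (degree Rm)"

definition red_mod :: "nat \<Rightarrow> int poly \<Rightarrow> int poly" where
  "red_mod p A = map_poly (\<lambda>c. c mod int p) A"

definition reduces_to_poly :: "nat \<Rightarrow> int poly \<Rightarrow> int poly \<Rightarrow> bool" where
  "reduces_to_poly p Rp Rm \<longleftrightarrow> (\<exists>Q. red_mod p Rp = red_mod p (Q * Rm))"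

definition deg_p :: "nat \<Rightarrow> int poly \<Rightarrow> int poly \<Rightarrow> nat" where
  "deg_p p Rp Rm = degree (red_mod p (SOME Q. red_mod p Rp = red_mod p (Q * Rm)))"

definition shift_ratfun :: "int poly \<Rightarrow> int poly \<Rightarrow> int \<Rightarrow> ratfun" where
  "shift_ratfun Rp Rm c = ratfun_of (pcompose Rp [:c, 1:]) (pcompose Rm [:c, 1:])"

definition Hplus :: "nat \<Rightarrow> (nat \<Rightarrow> int) \<Rightarrow> (nat \<Rightarrow> nat \<Rightarrow> int) \<Rightarrow> int poly \<Rightarrow> int poly \<Rightarrow> ratfun" where
  "Hplus k q h Hp Hm = (\<Sum>j \<in> PiE {1..k} (\<lambda>_. {0,1::nat}).
     (-1) ^ (\<Sum>i=1..k. j i) * shift_ratfun Hp Hm (\<Sum>i=1..k. h i (j i) * q i))"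

end

theory Submission
  imports Defs
begin

text \<open>
  Put D(a, b) G = G(t + a) - G(t + b). Then H+ arises from H by applying D(h_i0 q_i, h_i1 q_i) for
  i = 1, ..., k. On a quotient X/Y of integer polynomials D(a, b) acts exactly: D(a, b)(X/Y) = (a - b) X'/Y',
  where X' is the difference quotient ((X/Y)(t + b - a) - (X/Y)(t)) Y(t) Y(t + b - a) / (b - a) and
  Y' = Y(t) Y(t + b - a), both shifted by a. By Taylor expansion the top coefficient of X' is
  (deg X - deg Y) lc(X) lc(Y), as for the derivative, whatever the step b - a is. So when lc(X) and lc(Y) are
  units mod p and p does not divide deg X - deg Y, the leading coefficients of X'/Y' are again units and
  deg X' - deg Y' = deg X - deg Y - 1; all the p-adic content of H+ sits in the factor
  prod (h_i0 - h_i1) q_i, of valuation v = v_p(h).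

  Modulo p, H is a polynomial X1 plus a proper fraction X2/Y2, with all degrees at most p - k. After the k
  operators the polynomial part has degree deg X1 - k (at least 0 if X2 = 0, since then deg X1 = deg_p H >= k)
  and the proper part stays a proper fraction with unit leading coefficients, so
  H+ = p^v (U + p E) with U nonzero mod p and E p-integral. Adding an integer b = p^v c keeps U + c nonzero
  mod p, because either the proper part survives or U is a polynomial of positive degree (deg_p H > k);
  if v_p(b) < v, then b dominates.
\<close>

subsection \<open>Integer polynomials as rational functions\<close>

abbreviation rat_poly :: "int poly \<Rightarrow> rat poly" where
  "rat_poly \<equiv> map_poly of_int"

lemma rat_poly_add: "rat_poly (X + Y) = rat_poly X + rat_poly Y"
  by (rule poly_eqI) (simp add: coeff_map_poly)

lemma rat_poly_diff: "rat_poly (X - Y) = rat_poly X - rat_poly Y"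
  by (rule poly_eqI) (simp add: coeff_map_poly)

lemma rat_poly_smult: "rat_poly (smult c X) = smult (of_int c) (rat_poly X)"
  by (rule poly_eqI) (simp add: coeff_map_poly)

lemma rat_poly_mult: "rat_poly (X * Y) = rat_poly X * rat_poly Y"
  by (induction X) (simp_all add: rat_poly_add rat_poly_smult map_poly_pCons)

lemma rat_poly_pcompose: "rat_poly (pcompose X Z) = pcompose (rat_poly X) (rat_poly Z)"
  by (induction X) (simp_all add: pcompose_pCons rat_poly_add rat_poly_mult map_poly_pCons)

lemma rat_poly_eq_iff: "rat_poly X = rat_poly Y \<longleftrightarrow> X = Y"
  by (auto simp: poly_eq_iff coeff_map_poly)

lemma rat_poly_eq_0_iff: "rat_poly X = 0 \<longleftrightarrow> X = 0"
  using rat_poly_eq_iff[of X 0] by simp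

lemma ratfun_of_add:
  "Y \<noteq> 0 \<Longrightarrow> Y' \<noteq> 0 \<Longrightarrow> ratfun_of X Y + ratfun_of X' Y' = ratfun_of (X * Y' + X' * Y) (Y * Y')"
  by (simp add: ratfun_of_def rat_poly_eq_0_iff rat_poly_add rat_poly_mult)

lemma ratfun_of_diff:
  "Y \<noteq> 0 \<Longrightarrow> Y' \<noteq> 0 \<Longrightarrow> ratfun_of X Y - ratfun_of X' Y' = ratfun_of (X * Y' - X' * Y) (Y * Y')"
  by (simp add: ratfun_of_def rat_poly_eq_0_iff rat_poly_diff rat_poly_mult)

lemma ratfun_of_mult: "ratfun_of X Y * ratfun_of X' Y' = ratfun_of (X * X') (Y * Y')"
  by (simp add: ratfun_of_def rat_poly_mult)

lemma ratfun_of_0: "ratfun_of 0 Y = 0"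
  by (simp add: ratfun_of_def Zero_fract_def eq_fract)

lemma ratfun_of_eq_iff:
  "Y \<noteq> 0 \<Longrightarrow> Y' \<noteq> 0 \<Longrightarrow> ratfun_of X Y = ratfun_of X' Y' \<longleftrightarrow> X * Y' = X' * Y"
  by (simp add: ratfun_of_def eq_fract rat_poly_eq_0_iff flip: rat_poly_mult) (metis rat_poly_eq_iff)

lemma of_int_ratfun: "(of_int c :: ratfun) = ratfun_of [:c:] 1"
proof -
  have "(of_int c :: ratfun) = Fract (of_int c) 1"
  proof (cases c rule: int_cases)
    case (neg n)
    then show ?thesis
      by (simp only: of_int_minus of_int_of_nat_eq of_nat_fract minus_fract)
  qed (simp add: of_nat_fract)
  then show ?thesis
    by (simp add: ratfun_of_def of_int_poly map_poly_pCons)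
qed

lemma of_int_mult_ratfun_of: "of_int c * ratfun_of X Y = ratfun_of (smult c X) Y"
  by (simp add: of_int_ratfun ratfun_of_mult)

lemma of_nat_power_mult_ratfun_of: "of_nat p ^ w * ratfun_of X Y = ratfun_of (smult (int p ^ w) X) Y"
  using of_int_mult_ratfun_of[of "int p ^ w"] by simp

subsection \<open>Shifts and difference operators\<close>

definition shift :: "int \<Rightarrow> ratfun \<Rightarrow> ratfun" where
  "shift c G = (SOME G'. \<exists>A B. B \<noteq> 0 \<and> G = Fract A B \<and>
     G' = Fract (pcompose A [:of_int c, 1:]) (pcompose B [:of_int c, 1:]))"

lemma pcompose_linear_eq_0_iff: "pcompose A [:c, 1:] = 0 \<longleftrightarrow> A = (0 :: 'a::idom poly)"
  by (rule pcompose_eq_0_iff) simp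

lemma shift_Fract:
  assumes "B \<noteq> 0"
  shows "shift c (Fract A B) = Fract (pcompose A [:of_int c, 1:]) (pcompose B [:of_int c, 1:])"
  unfolding shift_def
proof (rule someI2, use assms in blast)
  fix G' assume "\<exists>A' B'. B' \<noteq> 0 \<and> Fract A B = Fract A' B' \<and>
    G' = Fract (pcompose A' [:of_int c, 1:]) (pcompose B' [:of_int c, 1:])"
  then obtain A' B' where "B' \<noteq> 0" "A * B' = A' * B"
    and G': "G' = Fract (pcompose A' [:of_int c, 1:]) (pcompose B' [:of_int c, 1:])"
    using assms by (auto simp: eq_fract)
  then show "G' = Fract (pcompose A [:of_int c, 1:]) (pcompose B [:of_int c, 1:])"
    using assms by (simp add: eq_fract pcompose_linear_eq_0_iff flip: pcompose_mult)
qed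

lemma shift_ratfun_of:
  "Y \<noteq> 0 \<Longrightarrow> shift c (ratfun_of X Y) = ratfun_of (pcompose X [:c, 1:]) (pcompose Y [:c, 1:])"
  by (simp add: ratfun_of_def shift_Fract rat_poly_eq_0_iff rat_poly_pcompose map_poly_pCons)

lemma shift_add: "shift c (G + G') = shift c G + shift c G'"
  by (cases G; cases G')
    (simp add: shift_Fract pcompose_linear_eq_0_iff pcompose_add pcompose_mult)

lemma shift_mult: "shift c (G * G') = shift c G * shift c G'"
  by (cases G; cases G') (simp add: shift_Fract pcompose_linear_eq_0_iff pcompose_mult)

lemma shift_uminus: "shift c (- G) = - shift c G"
  by (cases G) (simp add: shift_Fract pcompose_linear_eq_0_iff pcompose_uminus)

lemma shift_diff: "shift c (G - G') = shift c G - shift c G'"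
  by (metis diff_conv_add_uminus shift_add shift_uminus)

lemma shift_of_int: "shift c (of_int z) = of_int z"
  by (simp add: of_int_ratfun shift_ratfun_of pcompose_1)

lemma shift_0: "shift c 0 = 0"
  using shift_of_int[of c 0] by simp

lemma shift_shift: "shift a (shift b G) = shift (a + b) G"
proof (cases G)
  case (Fract A B)
  have "pcompose [:of_int b, 1:] [:of_int a, 1:] = ([:of_int (a + b), 1:] :: rat poly)"
    by (simp add: pcompose_pCons algebra_simps)
  with Fract show ?thesis
    by (simp add: shift_Fract pcompose_linear_eq_0_iff flip: pcompose_assoc)
qed

lemma shift_by_0: "shift 0 G = G"
  by (cases G) (simp add: shift_Fract)

lemma shift_sum: "shift c (\<Sum>x\<in>A. f x) = (\<Sum>x\<in>A. shift c (f x))"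
  by (induction A rule: infinite_finite_induct) (simp_all add: shift_0 shift_add)

definition diff_op :: "int \<Rightarrow> int \<Rightarrow> ratfun \<Rightarrow> ratfun" where
  "diff_op a b G = shift a G - shift b G"

lemma diff_op_add: "diff_op a b (G + G') = diff_op a b G + diff_op a b G'"
  by (simp add: diff_op_def shift_add)

lemma diff_op_of_int_mult: "diff_op a b (of_int c * G) = of_int c * diff_op a b G"
  by (simp add: diff_op_def shift_mult shift_of_int algebra_simps)

lemma diff_op_sum: "diff_op a b (\<Sum>x\<in>A. f x) = (\<Sum>x\<in>A. diff_op a b (f x))"
  by (simp add: diff_op_def shift_sum sum_subtractf)

primrec iter_diff_op :: "(nat \<Rightarrow> nat \<Rightarrow> int) \<Rightarrow> nat \<Rightarrow> ratfun \<Rightarrow> ratfun" where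
  "iter_diff_op s 0 G = G"
| "iter_diff_op s (Suc n) G = diff_op (s (Suc n) 0) (s (Suc n) 1) (iter_diff_op s n G)"

lemma iter_diff_op_add: "iter_diff_op s n (G + G') = iter_diff_op s n G + iter_diff_op s n G'"
  by (induction n) (simp_all add: diff_op_add)

lemma iter_diff_op_of_int_mult: "iter_diff_op s n (of_int c * G) = of_int c * iter_diff_op s n G"
  by (induction n) (simp_all add: diff_op_of_int_mult)

lemma iter_diff_op_eq_0:
  assumes "i \<in> {1..n}" "s i 0 = s i 1"
  shows "iter_diff_op s n G = 0"
  using assms
proof (induction n)
  case (Suc n)
  then show ?case
    by (cases "i = Suc n") (auto simp: diff_op_def shift_0)
qed simp

lemma sum_PiE_insert:
  assumes "m \<notin> S" "finite S"
  shows "(\<Sum>g \<in> PiE (insert m S) T. f g) = (\<Sum>y \<in> T m. \<Sum>g \<in> PiE S T. f (g(m := y)))"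
proof -
  have "(\<Sum>g \<in> PiE (insert m S) T. f g) = (\<Sum>(y, g) \<in> T m \<times> PiE S T. f (g(m := y)))"
    unfolding PiE_insert_eq
    by (subst sum.reindex[OF inj_combinator[OF assms(1)]]) (simp add: case_prod_unfold)
  then show ?thesis
    by (simp add: sum.cartesian_product)
qed

lemma alternating_sum_shift_eq_iter_diff_op:
  "(\<Sum>j \<in> PiE {1..n} (\<lambda>_. {0, 1::nat}). (-1) ^ (\<Sum>i=1..n. j i) * shift (\<Sum>i=1..n. s i (j i)) G)
     = iter_diff_op s n G"
proof (induction n)
  case 0
  then show ?case
    by (simp add: shift_by_0)
next
  case (Suc n)
  let ?m = "Suc n"
  let ?S = "\<lambda>g. \<Sum>i=1..n. g i" and ?T = "\<lambda>g. \<Sum>i=1..n. s i (g i)"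
  have ins: "{1..?m} = insert ?m {1..n}" and m: "?m \<notin> {1..n}"
    by auto
  have sum_upd: "(\<Sum>i=1..?m. f i ((g(?m := y)) i)) = f ?m y + (\<Sum>i=1..n. f i (g i))"
    for f :: "nat \<Rightarrow> nat \<Rightarrow> 'a::comm_monoid_add" and g y
  proof -
    have "(\<Sum>i=1..n. f i ((g(?m := y)) i)) = (\<Sum>i=1..n. f i (g i))"
      by (rule sum.cong) auto
    then show ?thesis
      unfolding ins by (simp add: m)
  qed
  have summand: "(\<Sum>y\<in>{0, 1}. (-1) ^ (\<Sum>i=1..?m. (g(?m := y)) i) * shift (\<Sum>i=1..?m. s i ((g(?m := y)) i)) G)
      = diff_op (s ?m 0) (s ?m 1) ((-1) ^ ?S g * shift (?T g) G)" for g :: "nat \<Rightarrow> nat"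
  proof -
    have "diff_op (s ?m 0) (s ?m 1) (of_int ((-1) ^ ?S g) * shift (?T g) G)
        = (-1) ^ ?S g * (shift (s ?m 0 + ?T g) G - shift (s ?m 1 + ?T g) G)"
      by (simp only: diff_op_of_int_mult) (simp add: diff_op_def shift_shift)
    then show ?thesis
      using sum_upd[of "\<lambda>_ j. j" g] sum_upd[of s g] by (simp add: algebra_simps)
  qed
  have "(\<Sum>j \<in> PiE {1..?m} (\<lambda>_. {0, 1::nat}). (-1) ^ (\<Sum>i=1..?m. j i) * shift (\<Sum>i=1..?m. s i (j i)) G)
      = (\<Sum>g \<in> PiE {1..n} (\<lambda>_. {0, 1::nat}). diff_op (s ?m 0) (s ?m 1) ((-1) ^ ?S g * shift (?T g) G))"
    unfolding ins sum_PiE_insert[OF m finite_atLeastAtMost] summand[symmetric]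
    by (rule sum.swap)
  also have "\<dots> = iter_diff_op s ?m G"
    unfolding diff_op_sum[symmetric] Suc.IH by simp
  finally show ?case .
qed

lemma Hplus_eq_iter_diff_op:
  assumes "Hm \<noteq> 0"
  shows "Hplus k q h Hp Hm = iter_diff_op (\<lambda>i j. h i j * q i) k (ratfun_of Hp Hm)"
  unfolding Hplus_def alternating_sum_shift_eq_iter_diff_op[symmetric]
  by (simp add: shift_ratfun_def shift_ratfun_of assms)

subsection \<open>Reduction modulo a prime\<close>

lemma nonzero_mod_iff: "nonzero_mod p X \<longleftrightarrow> \<not> [:int p:] dvd X"
  by (simp add: nonzero_mod_def const_poly_dvd_iff)

lemma const_prime_dvd_mult_iff:
  "prime p \<Longrightarrow> [:int p:] dvd X * Y \<longleftrightarrow> [:int p:] dvd X \<or> [:int p:] dvd Y"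
  by (rule prime_elem_dvd_mult_iff) (simp add: prime_elem_const_poly_iff)

lemma not_const_prime_dvd_1: "prime p \<Longrightarrow> \<not> [:int p:] dvd 1"
  by (auto simp: const_poly_dvd_iff_dvd_content content_1 dest: prime_gt_1_nat)

lemma const_dvd_smult: "[:c:] dvd smult c X"
  unfolding dvd_def by (rule exI[of _ X]) simp

lemma const_dvd_pcompose: "[:c:] dvd X \<Longrightarrow> [:c:] dvd pcompose X Z"
  by (metis dvdE dvd_triv_left pcompose_const pcompose_mult)

lemma const_dvd_pcompose_linear_iff:
  fixes X :: "'a::comm_ring_1 poly"
  shows "[:c:] dvd pcompose X [:a, 1:] \<longleftrightarrow> [:c:] dvd X"
proof
  assume "[:c:] dvd pcompose X [:a, 1:]"
  then have "[:c:] dvd pcompose (pcompose X [:a, 1:]) [:- a, 1:]"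
    by (rule const_dvd_pcompose)
  then show "[:c:] dvd X"
    by (simp add: pcompose_pCons flip: pcompose_assoc)
qed (rule const_dvd_pcompose)

lemma not_const_dvd_if_lead_coeff: "\<not> c dvd lead_coeff X \<Longrightarrow> \<not> [:c:] dvd X"
  by (auto simp: const_poly_dvd_iff)

lemma coeff_red_mod: "coeff (red_mod p X) i = coeff X i mod int p"
  by (simp add: red_mod_def coeff_map_poly)

lemma red_mod_eq_iff: "red_mod p X = red_mod p Y \<longleftrightarrow> [:int p:] dvd X - Y"
  by (simp add: poly_eq_iff coeff_red_mod const_poly_dvd_iff mod_eq_dvd_iff)

lemma red_mod_red_mod: "red_mod p (red_mod p X) = red_mod p X"
  by (simp add: poly_eq_iff coeff_red_mod)

lemma const_dvd_sub_red_mod: "[:int p:] dvd X - red_mod p X"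
  using red_mod_eq_iff[of p X "red_mod p X"] by (simp add: red_mod_red_mod)

lemma red_mod_eq_0_iff: "red_mod p X = 0 \<longleftrightarrow> [:int p:] dvd X"
  by (simp add: poly_eq_iff coeff_red_mod const_poly_dvd_iff dvd_eq_mod_eq_0)

lemma degree_red_mod_le: "degree (red_mod p X) \<le> degree X"
  unfolding red_mod_def by (rule map_poly_degree_leq)

lemma lead_coeff_red_mod:
  assumes "red_mod p X \<noteq> 0"
  shows "\<not> int p dvd lead_coeff (red_mod p X)"
  using leading_coeff_neq_0[OF assms] by (auto simp: coeff_red_mod dvd_eq_mod_eq_0)

(* G lies in p^w O, where O is the ring of p-integral rational functions; i.e. v_p(G) >= w. *)
definition p_divisible :: "nat \<Rightarrow> nat \<Rightarrow> ratfun \<Rightarrow> bool" where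
  "p_divisible p w G \<longleftrightarrow> (\<exists>X Y. \<not> [:int p:] dvd Y \<and> G = of_nat p ^ w * ratfun_of X Y)"

lemma p_divisible_add:
  assumes p: "prime p" and "p_divisible p w G" "p_divisible p w G'"
  shows "p_divisible p w (G + G')"
proof -
  obtain X Y X' Y' where Y: "\<not> [:int p:] dvd Y" "\<not> [:int p:] dvd Y'"
    and G: "G = of_nat p ^ w * ratfun_of X Y" "G' = of_nat p ^ w * ratfun_of X' Y'"
    using assms unfolding p_divisible_def by blast
  moreover have "Y \<noteq> 0" "Y' \<noteq> 0"
    using Y by auto
  ultimately have "G + G' = of_nat p ^ w * ratfun_of (X * Y' + X' * Y) (Y * Y')"
    by (simp add: ratfun_of_add flip: distrib_left)
  moreover have "\<not> [:int p:] dvd Y * Y'"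
    using Y const_prime_dvd_mult_iff[OF p] by blast
  ultimately show ?thesis
    unfolding p_divisible_def by blast
qed

lemma p_divisible_of_int_mult:
  assumes "p_divisible p w G"
  shows "p_divisible p (w + multiplicity (int p) c) (of_int c * G)"
proof -
  obtain X Y where "\<not> [:int p:] dvd Y" and G: "G = of_nat p ^ w * ratfun_of X Y"
    using assms unfolding p_divisible_def by blast
  moreover obtain c' where "c = int p ^ multiplicity (int p) c * c'"
    using multiplicity_dvd by blast
  then have "(of_int c :: ratfun) = of_nat p ^ multiplicity (int p) c * of_int c'"
    by (metis of_int_mult of_int_of_nat_eq of_int_power)
  ultimately have "of_int c * G = of_nat p ^ (w + multiplicity (int p) c) * ratfun_of (smult c' X) Y"
    by (simp add: power_add flip: of_int_mult_ratfun_of)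
  with \<open>\<not> [:int p:] dvd Y\<close> show ?thesis
    unfolding p_divisible_def by blast
qed

lemma p_divisible_ratfun_of_diff:
  assumes p: "prime p" and Y: "\<not> [:int p:] dvd Y" "\<not> [:int p:] dvd Y'"
    and cong: "[:int p:] dvd X * Y' - X' * Y"
  shows "p_divisible p 1 (ratfun_of X Y - ratfun_of X' Y')"
proof -
  obtain Z where Z: "X * Y' - X' * Y = smult (int p) Z"
    using cong by (auto elim: dvdE)
  have "Y \<noteq> 0" "Y' \<noteq> 0"
    using Y by auto
  then have "ratfun_of X Y - ratfun_of X' Y' = of_nat p ^ 1 * ratfun_of Z (Y * Y')"
    using of_int_mult_ratfun_of[of "int p" Z] by (simp add: ratfun_of_diff Z)
  moreover have "\<not> [:int p:] dvd Y * Y'"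
    using Y const_prime_dvd_mult_iff[OF p] by blast
  ultimately show ?thesis
    unfolding p_divisible_def by blast
qed

subsection \<open>Difference quotients\<close>

lemma pcompose_linear_taylor:
  fixes X :: "'a::{idom, ring_char_0} poly"
  shows "\<exists>R. pcompose X [:d, 1:] = X + smult d (pderiv X) + smult (d ^ 2) R
    \<and> (R = 0 \<or> degree R + 2 \<le> degree X)"
proof (induction X)
  case 0
  then show ?case by simp
next
  case (pCons a X)
  then obtain R where R: "pcompose X [:d, 1:] = X + smult d (pderiv X) + smult (d ^ 2) R"
    and deg_R: "R = 0 \<or> degree R + 2 \<le> degree X"
    by blast
  define R' where "R' = pderiv X + [:d, 1:] * R"
  have "pcompose (pCons a X) [:d, 1:] = [:a:] + [:d, 1:] * pcompose X [:d, 1:]"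
    by (simp add: pcompose_pCons)
  also have "\<dots> = pCons a X + smult d (pderiv (pCons a X)) + smult (d ^ 2) R'"
    unfolding R R'_def pderiv_pCons
    by (simp add: algebra_simps power2_eq_square smult_add_right flip: smult_smult)
  finally have "pcompose (pCons a X) [:d, 1:] = \<dots>" .
  moreover have "R' = 0 \<or> degree R' + 2 \<le> degree (pCons a X)"
  proof (cases "degree X = 0")
    case True
    then show ?thesis
      using deg_R by (simp add: R'_def pderiv_eq_0_iff)
  next
    case False
    have "degree ([:d, 1:] * R) \<le> degree X - 1"
      using deg_R degree_mult_le[of "[:d, 1:]" R] by auto
    then have "degree R' \<le> degree X - 1"
      unfolding R'_def by (intro degree_add_le) (simp_all add: degree_pderiv)
    then show ?thesis
      using False by auto
  qed
  ultimately show ?case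
    by blast
qed

definition diff_quot :: "int \<Rightarrow> int poly \<Rightarrow> int poly \<Rightarrow> int poly" where
  "diff_quot d X Y = (pcompose X [:d, 1:] * Y - X * pcompose Y [:d, 1:]) div [:d:]"

lemma diff_quot_taylor:
  obtains RX RY where
    "smult d (diff_quot d X Y) = pcompose X [:d, 1:] * Y - X * pcompose Y [:d, 1:]"
    "d \<noteq> 0 \<Longrightarrow> diff_quot d X Y = pderiv X * Y - X * pderiv Y + smult d (RX * Y - X * RY)"
    "RX = 0 \<or> degree RX + 2 \<le> degree X" "RY = 0 \<or> degree RY + 2 \<le> degree Y"
proof -
  obtain RX RY where RX: "pcompose X [:d, 1:] = X + smult d (pderiv X) + smult (d ^ 2) RX"
    and RY: "pcompose Y [:d, 1:] = Y + smult d (pderiv Y) + smult (d ^ 2) RY"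
    and deg: "RX = 0 \<or> degree RX + 2 \<le> degree X" "RY = 0 \<or> degree RY + 2 \<le> degree Y"
    using pcompose_linear_taylor by metis
  define M where "M = pderiv X * Y - X * pderiv Y + smult d (RX * Y - X * RY)"
  have num: "pcompose X [:d, 1:] * Y - X * pcompose Y [:d, 1:] = [:d:] * M"
    unfolding RX RY M_def
    by (simp add: algebra_simps power2_eq_square smult_diff_right flip: smult_smult)
  have "diff_quot d X Y = M" if "d \<noteq> 0"
    unfolding diff_quot_def num using that by (intro nonzero_mult_div_cancel_left) simp
  moreover have "smult d (diff_quot d X Y) = [:d:] * M"
    using calculation by (cases "d = 0") simp_all
  ultimately show thesis
    using that[of RX RY] deg num unfolding M_def by argo
qed

lemma coeff_mult_top:
  fixes A B :: "'a::idom poly"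
  assumes "degree A + degree B \<le> i"
  shows "coeff (A * B) i = (if i = degree A + degree B then lead_coeff A * lead_coeff B else 0)"
proof (cases "i = degree A + degree B")
  case False
  then have "degree (A * B) < i"
    using assms degree_mult_le[of A B] by linarith
  then show ?thesis
    using False by (simp add: coeff_eq_0)
qed (simp add: coeff_mult_degree_sum)

lemma coeff_pderiv_mult_top:
  fixes X Y :: "int poly"
  assumes "degree X + degree Y - 1 \<le> i"
  shows "coeff (pderiv X * Y) i
    = (if i = degree X + degree Y - 1 then int (degree X) * lead_coeff X * lead_coeff Y else 0)"
proof (cases "degree X = 0")
  case False
  have "lead_coeff (pderiv X) = int (degree X) * lead_coeff X"
    using False by (simp add: degree_pderiv coeff_pderiv)
  moreover have "degree (pderiv X) + degree Y = degree X + degree Y - 1"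
    using False by (simp add: degree_pderiv)
  ultimately show ?thesis
    using coeff_mult_top[of "pderiv X" Y i] assms by simp
next
  case True
  then have "pderiv X = 0"
    by (simp add: pderiv_eq_0_iff)
  then show ?thesis
    using True by simp
qed

lemma coeff_diff_quot_top:
  assumes "d \<noteq> 0" "degree X + degree Y - 1 \<le> i"
  shows "coeff (diff_quot d X Y) i = (if i = degree X + degree Y - 1
    then (int (degree X) - int (degree Y)) * lead_coeff X * lead_coeff Y else 0)"
proof -
  obtain RX RY where Q: "diff_quot d X Y = pderiv X * Y - pderiv Y * X + smult d (RX * Y - X * RY)"
    and deg: "RX = 0 \<or> degree RX + 2 \<le> degree X" "RY = 0 \<or> degree RY + 2 \<le> degree Y"
    using diff_quot_taylor[of d X Y] assms(1) by (metis mult.commute)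
  have vanish: "coeff (A * B) i = 0" if "A = 0 \<or> B = 0 \<or> degree A + degree B < i" for A B :: "int poly"
    using that degree_mult_le[of A B] by (auto intro: coeff_eq_0)
  have "coeff (RX * Y) i = 0" "coeff (X * RY) i = 0"
    using deg assms(2) by (auto intro!: vanish)
  then show ?thesis
    using coeff_pderiv_mult_top[of X Y i] coeff_pderiv_mult_top[of Y X i] assms(2)
    by (simp add: Q add.commute algebra_simps)
qed

lemma smult_diff_quot:
  "smult d (diff_quot d X Y) = pcompose X [:d, 1:] * Y - X * pcompose Y [:d, 1:]"
  by (metis diff_quot_taylor)

lemma diff_quot_0: "diff_quot d 0 Y = 0"
  by (simp add: diff_quot_def)

abbreviation ratfun_of_pair :: "int poly \<times> int poly \<Rightarrow> ratfun" where
  "ratfun_of_pair P \<equiv> ratfun_of (fst P) (snd P)"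

definition diff_step :: "int \<Rightarrow> int \<Rightarrow> int poly \<times> int poly \<Rightarrow> int poly \<times> int poly" where
  "diff_step a b P = (pcompose (diff_quot (b - a) (fst P) (snd P)) [:a, 1:],
     pcompose (snd P * pcompose (snd P) [:b - a, 1:]) [:a, 1:])"

lemma snd_diff_step_eq_0_iff: "snd (diff_step a b P) = 0 \<longleftrightarrow> snd P = 0"
  by (simp add: diff_step_def pcompose_linear_eq_0_iff)

lemma diff_op_ratfun_of_pair:
  assumes "snd P \<noteq> 0"
  shows "diff_op a b (ratfun_of_pair P) = of_int (a - b) * ratfun_of_pair (diff_step a b P)"
proof -
  obtain X Y where P: "P = (X, Y)"
    by fastforce
  define d where "d = b - a"
  have Y: "Y \<noteq> 0" "pcompose Y [:d, 1:] \<noteq> 0"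
    using assms by (simp_all add: P pcompose_linear_eq_0_iff)
  define Q where "Q = diff_quot d X Y"
  define D where "D = Y * pcompose Y [:d, 1:]"
  have "smult (a - b) Q = X * pcompose Y [:d, 1:] - pcompose X [:d, 1:] * Y"
    using smult_diff_quot[of d X Y] by (metis Q_def d_def minus_diff_eq smult_minus_left)
  then have "ratfun_of X Y - shift d (ratfun_of X Y) = of_int (a - b) * ratfun_of Q D"
    using Y by (simp add: shift_ratfun_of ratfun_of_diff of_int_mult_ratfun_of D_def del: of_int_diff)
  moreover have "diff_op a b (ratfun_of X Y) = shift a (ratfun_of X Y - shift d (ratfun_of X Y))"
    by (simp add: diff_op_def shift_diff shift_shift d_def)
  ultimately have "diff_op a b (ratfun_of X Y) = of_int (a - b) * shift a (ratfun_of Q D)"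
    by (simp only: shift_mult shift_of_int)
  then show ?thesis
    using Y by (simp add: P diff_step_def shift_ratfun_of Q_def D_def d_def)
qed

lemma degree_pcompose_linear: "degree (pcompose X [:a, 1:]) = degree (X :: 'a::idom poly)"
  by (simp add: degree_pcompose)

lemma lead_coeff_pcompose_linear: "lead_coeff (pcompose X [:a, 1:]) = lead_coeff (X :: 'a::idom poly)"
  by (simp add: lead_coeff_comp)

definition p_unit_lead_coeffs :: "nat \<Rightarrow> int poly \<times> int poly \<Rightarrow> bool" where
  "p_unit_lead_coeffs p P \<longleftrightarrow> \<not> int p dvd lead_coeff (fst P) \<and> \<not> int p dvd lead_coeff (snd P)"

definition degree_difference :: "int poly \<times> int poly \<Rightarrow> int" where
  "degree_difference P = int (degree (fst P)) - int (degree (snd P))"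

lemma diff_step_p_unit_lead_coeffs:
  assumes p: "prime p" and "a \<noteq> b" and P: "p_unit_lead_coeffs p P"
    and not_dvd: "\<not> int p dvd degree_difference P"
  shows "p_unit_lead_coeffs p (diff_step a b P) \<and> degree_difference (diff_step a b P) = degree_difference P - 1"
proof -
  obtain X Y where XY: "P = (X, Y)"
    by fastforce
  define Q where "Q = diff_quot (b - a) X Y"
  define n where "n = degree X + degree Y - 1"
  have lc: "\<not> int p dvd lead_coeff X" "\<not> int p dvd lead_coeff Y"
    using P by (auto simp: p_unit_lead_coeffs_def XY)
  have deg_ne: "degree X \<noteq> degree Y"
    using not_dvd by (auto simp: degree_difference_def XY)
  have "\<not> int p dvd (int (degree X) - int (degree Y)) * lead_coeff X * lead_coeff Y"
    using lc not_dvd p by (simp add: prime_dvd_mult_iff degree_difference_def XY)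
  moreover have Q_top: "coeff Q i = (if i = n then (int (degree X) - int (degree Y)) * lead_coeff X * lead_coeff Y else 0)"
    if "n \<le> i" for i
    using coeff_diff_quot_top[of "b - a" X Y i] \<open>a \<noteq> b\<close> that by (simp add: Q_def n_def)
  ultimately have "coeff Q n \<noteq> 0" "\<not> int p dvd coeff Q n"
    by auto
  then have "degree Q = n"
    using Q_top by (intro antisym le_degree degree_le) auto
  then have lc_Q: "\<not> int p dvd lead_coeff Q"
    using \<open>\<not> int p dvd coeff Q n\<close> by simp
  define D where "D = Y * pcompose Y [:b - a, 1:]"
  have "Y \<noteq> 0"
    using lc by auto
  then have "degree D = 2 * degree Y"
    by (simp add: D_def degree_mult_eq pcompose_linear_eq_0_iff degree_pcompose_linear)
  have "lead_coeff D = lead_coeff Y * lead_coeff Y"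
    by (simp only: D_def lead_coeff_mult lead_coeff_pcompose_linear)
  moreover have "\<not> int p dvd lead_coeff Y * lead_coeff Y"
    using lc p by (simp add: prime_dvd_mult_iff)
  moreover note \<open>degree D = 2 * degree Y\<close>
  moreover have "diff_step a b P = (pcompose Q [:a, 1:], pcompose D [:a, 1:])"
    by (simp add: diff_step_def XY Q_def D_def)
  ultimately show ?thesis
    using lc_Q \<open>degree Q = n\<close> deg_ne
    unfolding p_unit_lead_coeffs_def degree_difference_def
    by (simp only: fst_conv snd_conv lead_coeff_pcompose_linear) (simp add: degree_pcompose_linear n_def XY)
qed

primrec iter_diff_step :: "(nat \<Rightarrow> nat \<Rightarrow> int) \<Rightarrow> nat \<Rightarrow> int poly \<times> int poly \<Rightarrow> int poly \<times> int poly" where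
  "iter_diff_step s 0 P = P"
| "iter_diff_step s (Suc n) P = diff_step (s (Suc n) 0) (s (Suc n) 1) (iter_diff_step s n P)"

lemma snd_iter_diff_step_eq_0_iff: "snd (iter_diff_step s n P) = 0 \<longleftrightarrow> snd P = 0"
  by (induction n) (simp_all add: snd_diff_step_eq_0_iff)

lemma iter_diff_op_ratfun_of_pair:
  assumes "snd P \<noteq> 0"
  shows "iter_diff_op s n (ratfun_of_pair P)
    = of_int (\<Prod>i=1..n. s i 0 - s i 1) * ratfun_of_pair (iter_diff_step s n P)"
proof (induction n)
  case (Suc n)
  have "snd (iter_diff_step s n P) \<noteq> 0"
    using assms by (simp add: snd_iter_diff_step_eq_0_iff)
  then show ?case
    by (simp add: Suc.IH diff_op_of_int_mult diff_op_ratfun_of_pair del: of_int_diff of_int_prod)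
qed simp

lemma not_const_dvd_snd_iter_diff_step:
  assumes "prime p" "\<not> [:int p:] dvd snd P"
  shows "\<not> [:int p:] dvd snd (iter_diff_step s n P)"
proof (induction n)
  case (Suc n)
  then show ?case
    by (simp add: diff_step_def const_dvd_pcompose_linear_iff const_prime_dvd_mult_iff[OF assms(1)])
qed (simp add: assms(2))

lemma snd_iter_diff_step_1: "snd P = 1 \<Longrightarrow> snd (iter_diff_step s n P) = 1"
  by (induction n) (simp_all add: diff_step_def pcompose_1)

lemma fst_iter_diff_step_0: "fst P = 0 \<Longrightarrow> fst (iter_diff_step s n P) = 0"
  by (induction n) (simp_all add: diff_step_def diff_quot_0)

lemma p_divisible_iter_diff_op:
  assumes p: "prime p" and "p_divisible p w G"
  shows "p_divisible p (w + multiplicity (int p) (\<Prod>i=1..n. s i 0 - s i 1)) (iter_diff_op s n G)"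
proof -
  obtain X Y where Y: "\<not> [:int p:] dvd Y" and G: "G = of_nat p ^ w * ratfun_of X Y"
    using assms(2) unfolding p_divisible_def by blast
  define P where "P = iter_diff_step s n (X, Y)"
  have "\<not> [:int p:] dvd snd P"
    using not_const_dvd_snd_iter_diff_step[OF p, of "(X, Y)"] Y by (simp add: P_def)
  then have "p_divisible p w (of_nat p ^ w * ratfun_of_pair P)"
    unfolding p_divisible_def by blast
  moreover have "Y \<noteq> 0"
    using Y by auto
  then have "iter_diff_op s n G = of_int (\<Prod>i=1..n. s i 0 - s i 1) * (of_nat p ^ w * ratfun_of_pair P)"
    using iter_diff_op_of_int_mult[of s n "int p ^ w"] iter_diff_op_ratfun_of_pair[of "(X, Y)" s n]
    by (simp add: G P_def)
  ultimately show ?thesis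
    by (metis p_divisible_of_int_mult)
qed

lemma iter_diff_step_p_unit_lead_coeffs:
  assumes p: "prime p" and s: "\<forall>i\<in>{1..n}. s i 0 \<noteq> s i 1" and P: "p_unit_lead_coeffs p P"
    and not_dvd: "\<forall>j<n. \<not> int p dvd (degree_difference P - int j)"
  shows "p_unit_lead_coeffs p (iter_diff_step s n P)
    \<and> degree_difference (iter_diff_step s n P) = degree_difference P - int n"
  using s not_dvd
proof (induction n)
  case (Suc n)
  then show ?case
    using diff_step_p_unit_lead_coeffs[OF p, of "s (Suc n) 0" "s (Suc n) 1" "iter_diff_step s n P"]
    by auto
qed (simp add: P)

subsection \<open>Polynomial part and proper part modulo \<open>p\<close>\<close>

lemma degree_pseudo_divmod_quotient_le:
  fixes A B :: "'a::idom poly"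
  assumes "B \<noteq> 0" "pseudo_divmod A B = (Q, R)"
  shows "degree Q \<le> degree A"
proof (cases "Q = 0")
  case False
  have div: "smult (lead_coeff B ^ (Suc (degree A) - degree B)) A = B * Q + R"
    and R: "R = 0 \<or> degree R < degree B"
    using pseudo_divmod[OF assms] by auto
  then have "degree (B * Q + R) = degree B + degree Q"
    using False \<open>B \<noteq> 0\<close> by (auto simp: degree_mult_eq degree_add_eq_left)
  then show ?thesis
    using div \<open>B \<noteq> 0\<close> by (metis degree_smult_eq le_add2 leading_coeff_0_iff power_eq_0_iff)
qed simp

lemma pseudo_divmod_mod_p:
  assumes p: "prime p" and B: "\<not> int p dvd lead_coeff B"
  obtains Q R where "[:int p:] dvd A - (Q * B + R)" "degree Q \<le> degree A" "R = 0 \<or> degree R < degree B"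
proof -
  have "B \<noteq> 0"
    using B by auto
  obtain Q0 R0 where pd: "pseudo_divmod A B = (Q0, R0)"
    by fastforce
  define a where "a = lead_coeff B ^ (Suc (degree A) - degree B)"
  have div: "smult a A = B * Q0 + R0" and R0: "R0 = 0 \<or> degree R0 < degree B"
    using pseudo_divmod[OF \<open>B \<noteq> 0\<close> pd] unfolding a_def by auto
  have "\<not> int p dvd a"
    using B p prime_dvd_power[of "int p" "lead_coeff B"] unfolding a_def by auto
  then have "coprime a (int p)"
    using p prime_imp_coprime[of "int p" a] by (simp add: coprime_commute)
  then obtain a' k where bezout: "a' * a + k * int p = 1"
    using bezout_int[of a "int p"] by (auto simp: coprime_iff_gcd_eq_1)
  have "smult a' Q0 * B + smult a' R0 = smult (a' * a) A"
    unfolding smult_smult[symmetric] div by (simp add: smult_add_right mult.commute)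
  moreover have "a' * a = 1 - k * int p"
    using bezout by linarith
  ultimately have "A - (smult a' Q0 * B + smult a' R0) = smult (int p) (smult k A)"
    by (simp add: smult_diff_left mult.commute)
  then have "[:int p:] dvd A - (smult a' Q0 * B + smult a' R0)"
    by (simp only: const_dvd_smult)
  moreover have "degree (smult a' Q0) \<le> degree A"
    using degree_pseudo_divmod_quotient_le[OF \<open>B \<noteq> 0\<close> pd] degree_smult_le order_trans by blast
  moreover have "smult a' R0 = 0 \<or> degree (smult a' R0) < degree B"
    using R0 degree_smult_le[of a' R0] by auto
  ultimately show thesis
    by (rule that)
qed

lemma mod_p_division:
  assumes p: "prime p" and B: "\<not> int p dvd lead_coeff B"
  obtains Q R where "[:int p:] dvd A - (Q * B + R)" "degree Q \<le> degree A"
    "red_mod p Q = Q" "red_mod p R = R" "R = 0 \<or> degree R < degree B"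
proof -
  obtain Q0 R0 where QR0: "[:int p:] dvd A - (Q0 * B + R0)" "degree Q0 \<le> degree A"
    "R0 = 0 \<or> degree R0 < degree B"
    by (rule pseudo_divmod_mod_p[OF p B]) (rule that)
  define Q where "Q = red_mod p Q0"
  define R where "R = red_mod p R0"
  have "A - (Q * B + R) = (A - (Q0 * B + R0)) + ((Q0 - Q) * B + (R0 - R))"
    by (simp add: algebra_simps)
  moreover have "[:int p:] dvd (Q0 - Q) * B + (R0 - R)"
    unfolding Q_def R_def by (intro dvd_add dvd_mult2 const_dvd_sub_red_mod)
  ultimately have "[:int p:] dvd A - (Q * B + R)"
    using QR0(1) by (metis dvd_add)
  moreover have "degree Q \<le> degree A" "R = 0 \<or> degree R < degree B"
    using QR0 degree_red_mod_le[of p Q0] degree_red_mod_le[of p R0]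
    by (auto simp: Q_def R_def red_mod_def)
  ultimately show thesis
    using that by (simp add: Q_def R_def red_mod_red_mod)
qed

lemma reduces_to_poly_deg_p:
  assumes p: "prime p" and Hm: "\<not> [:int p:] dvd Hm"
    and cong: "[:int p:] dvd Hp - Q * Hm" and Q: "red_mod p Q = Q"
  shows "reduces_to_poly p Hp Hm \<and> deg_p p Hp Hm = degree Q"
proof -
  have red: "red_mod p Hp = red_mod p (Q * Hm)"
    using cong by (simp add: red_mod_eq_iff)
  define Q' where "Q' = (SOME Q'. red_mod p Hp = red_mod p (Q' * Hm))"
  have "red_mod p Hp = red_mod p (Q' * Hm)"
    unfolding Q'_def using red by (rule someI)
  with red have "[:int p:] dvd (Q' - Q) * Hm"
    by (simp add: red_mod_eq_iff algebra_simps)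
  then have "red_mod p Q' = Q"
    using Hm Q const_prime_dvd_mult_iff[OF p] by (metis red_mod_eq_iff)
  then show ?thesis
    using red by (auto simp: reduces_to_poly_def deg_p_def Q'_def)
qed

lemma ratfun_mod_p_decomposition:
  assumes p: "prime p" and Hm: "\<not> [:int p:] dvd Hm"
  obtains X1 X2 Y2 where
    "p_divisible p 1 (ratfun_of Hp Hm - (ratfun_of X1 1 + ratfun_of X2 Y2))"
    "X1 = 0 \<or> \<not> int p dvd lead_coeff X1" "degree X1 \<le> degree Hp"
    "\<not> int p dvd lead_coeff Y2" "degree Y2 \<le> degree Hm"
    "X2 = 0 \<or> \<not> int p dvd lead_coeff X2 \<and> degree X2 < degree Y2"
    "X2 = 0 \<Longrightarrow> reduces_to_poly p Hp Hm \<and> deg_p p Hp Hm = degree X1"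
proof -
  define B where "B = red_mod p Hm"
  have "B \<noteq> 0"
    using Hm by (simp add: B_def red_mod_eq_0_iff)
  then have B: "\<not> int p dvd lead_coeff B"
    unfolding B_def by (rule lead_coeff_red_mod)
  have Hm_B: "[:int p:] dvd Hm - B"
    unfolding B_def by (rule const_dvd_sub_red_mod)
  obtain Q R where QR: "[:int p:] dvd Hp - (Q * B + R)" "degree Q \<le> degree Hp"
    "red_mod p Q = Q" "red_mod p R = R" "R = 0 \<or> degree R < degree B"
    using mod_p_division[OF p B] by blast
  have lc: "X = 0 \<or> \<not> int p dvd lead_coeff X" if "red_mod p X = X" for X
    using lead_coeff_red_mod[of p X] that by auto
  have "[:int p:] dvd Hp * B - (Q * B + R) * Hm"
  proof -
    have "Hp * B - (Q * B + R) * Hm = (Hp - (Q * B + R)) * B - (Q * B + R) * (Hm - B)"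
      by (simp add: algebra_simps)
    then show ?thesis
      using QR(1) Hm_B by (simp add: dvd_diff dvd_mult2)
  qed
  then have "p_divisible p 1 (ratfun_of Hp Hm - ratfun_of (Q * B + R) B)"
    using B Hm by (intro p_divisible_ratfun_of_diff p) (auto simp: not_const_dvd_if_lead_coeff)
  moreover have "ratfun_of (Q * B + R) B = ratfun_of Q 1 + ratfun_of R B"
    using \<open>B \<noteq> 0\<close> by (simp add: ratfun_of_add)
  moreover have "reduces_to_poly p Hp Hm \<and> deg_p p Hp Hm = degree Q" if "R = 0"
  proof (rule reduces_to_poly_deg_p[OF p Hm _ QR(3)])
    have "Hp - Q * Hm = (Hp - (Q * B + R)) - Q * (Hm - B)"
      using that by (simp add: algebra_simps)
    then show "[:int p:] dvd Hp - Q * Hm"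
      using QR(1) Hm_B by (metis dvd_diff dvd_mult)
  qed
  moreover have "degree B \<le> degree Hm"
    unfolding B_def by (rule degree_red_mod_le)
  ultimately show thesis
    using that[of Q R B] QR lc[of Q] lc[of R] B by auto
qed

lemma not_const_dvd_add_const:
  assumes "\<not> int p dvd lead_coeff X" "c = 0 \<or> degree X \<noteq> 0"
  shows "\<not> [:int p:] dvd X + [:c:]"
proof (rule not_const_dvd_if_lead_coeff)
  show "\<not> int p dvd lead_coeff (X + [:c:])"
    using assms lead_coeff_add_le[of "[:c:]" X] by (auto simp: add.commute)
qed

lemma not_const_dvd_add_proper_fraction:
  assumes p: "prime p" and lc: "\<not> int p dvd lead_coeff X" "\<not> int p dvd lead_coeff Y"
    and deg: "degree X < degree Y"
  shows "\<not> [:int p:] dvd S * Y + X"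
proof (cases "[:int p:] dvd S")
  case True
  then show ?thesis
    using lc(1) by (metis dvd_add_right_iff dvd_mult2 not_const_dvd_if_lead_coeff)
next
  case False
  define S' where "S' = red_mod p S"
  have "S' \<noteq> 0"
    using False by (simp add: S'_def red_mod_eq_0_iff)
  have "coeff (S' * Y + X) (degree S' + degree Y) = lead_coeff S' * lead_coeff Y"
    using deg by (simp add: coeff_mult_degree_sum coeff_eq_0)
  moreover have "\<not> int p dvd lead_coeff S' * lead_coeff Y"
    using lead_coeff_red_mod[OF \<open>S' \<noteq> 0\<close>[unfolded S'_def]] lc p
    by (simp add: S'_def prime_dvd_mult_iff)
  ultimately have "\<not> [:int p:] dvd S' * Y + X"
    by (metis const_poly_dvd_iff)
  moreover have "[:int p:] dvd (S * Y + X) - (S' * Y + X)"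
    using const_dvd_sub_red_mod[of p S] by (simp add: S'_def dvd_mult2 flip: left_diff_distrib)
  ultimately show ?thesis
    by (metis dvd_diff_right_iff dvd_diff)
qed

lemma iter_diff_step_polynomial_not_dvd:
  assumes p: "prime p" and s: "\<forall>i\<in>{1..k}. s i 0 \<noteq> s i 1"
    and X: "\<not> int p dvd lead_coeff X" and deg: "k \<le> degree X" "degree X < p"
    and u: "\<not> int p dvd u" and c: "c = 0 \<or> k < degree X"
  shows "\<not> [:int p:] dvd smult u (fst (iter_diff_step s k (X, 1))) + [:c:]"
proof -
  have "\<not> int p dvd int (degree X - j)" if "j < k" for j
    using that deg by (auto dest: zdvd_imp_le)
  then have "\<forall>j<k. \<not> int p dvd (degree_difference (X, 1) - int j)"
    using deg by (simp add: degree_difference_def of_nat_diff)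
  moreover have "p_unit_lead_coeffs p (X, 1)"
    using X prime_gt_1_nat[OF p] by (simp add: p_unit_lead_coeffs_def)
  ultimately have "p_unit_lead_coeffs p (iter_diff_step s k (X, 1))"
    and "degree_difference (iter_diff_step s k (X, 1)) = int (degree X) - int k"
    using iter_diff_step_p_unit_lead_coeffs[OF p s] by (auto simp: degree_difference_def)
  moreover have "snd (iter_diff_step s k (X, 1)) = 1"
    by (simp add: snd_iter_diff_step_1)
  ultimately have "\<not> int p dvd lead_coeff (fst (iter_diff_step s k (X, 1)))"
    and "degree (fst (iter_diff_step s k (X, 1))) = degree X - k"
    using deg by (simp_all add: p_unit_lead_coeffs_def degree_difference_def)
  then show ?thesis
    using u c p by (intro not_const_dvd_add_const) (auto simp: prime_dvd_mult_iff)
qed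

lemma iter_diff_step_proper_not_dvd:
  assumes p: "prime p" and s: "\<forall>i\<in>{1..k}. s i 0 \<noteq> s i 1"
    and P: "p_unit_lead_coeffs p P" and deg: "degree (fst P) < degree (snd P)" "degree (snd P) + k \<le> p"
    and u: "\<not> int p dvd u"
  shows "\<not> [:int p:] dvd S * snd (iter_diff_step s k P) + smult u (fst (iter_diff_step s k P))"
proof -
  have "\<not> int p dvd (degree_difference P - int j)" if "j < k" for j
  proof -
    have "degree_difference P - int j = - int (degree (snd P) - degree (fst P) + j)"
      using deg by (simp add: degree_difference_def of_nat_diff)
    moreover have "\<not> int p dvd int (degree (snd P) - degree (fst P) + j)"
      using that deg by (auto dest: zdvd_imp_le)
    ultimately show ?thesis
      by (metis dvd_minus_iff)
  qed
  then have "p_unit_lead_coeffs p (iter_diff_step s k P)"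
    and "degree (fst (iter_diff_step s k P)) < degree (snd (iter_diff_step s k P))"
    using iter_diff_step_p_unit_lead_coeffs[OF p s P] deg by (auto simp: degree_difference_def)
  then show ?thesis
    using u p by (intro not_const_dvd_add_proper_fraction) (auto simp: p_unit_lead_coeffs_def prime_dvd_mult_iff)
qed

subsection \<open>Valuations\<close>

lemma Fract_const_mult_ratfun_of: "Fract [:of_int c:] 1 * ratfun_of X Y = ratfun_of (smult c X) Y"
  by (simp add: ratfun_of_def rat_poly_smult)

lemma p_power_representation_exponent_le:
  assumes p: "prime p" and A: "\<not> [:int p:] dvd A" and B': "\<not> [:int p:] dvd B'" and "B \<noteq> 0"
    and eq: "Fract [:of_nat p powi e:] 1 * ratfun_of A B = Fract [:of_nat p powi e':] 1 * ratfun_of A' B'"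
  shows "e' \<le> e"
proof (rule ccontr)
  assume "\<not> e' \<le> e"
  define m where "m = nat (e' - e)"
  have "(of_nat p :: rat) \<noteq> 0"
    using p by (simp add: prime_gt_0_nat)
  moreover have "e' = e + int m"
    using \<open>\<not> e' \<le> e\<close> by (simp add: m_def)
  ultimately have inv: "(of_nat p powi (- e) * of_nat p powi e :: rat) = 1"
    and "(of_nat p powi e' :: rat) = of_nat p powi e * of_nat p ^ m"
    by (simp_all add: power_int_minus power_int_add)
  then have "(of_nat p powi (- e) * of_nat p powi e' :: rat) = of_int (int p ^ m)"
    by (simp add: mult.assoc[symmetric])
  moreover have Fract_mult: "Fract [:x:] 1 * (Fract [:y:] 1 * R) = Fract [:x * y:] 1 * R"
    for x y :: rat and R :: ratfun
    by (simp add: mult.assoc[symmetric] mult.commute[of y x])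
  ultimately have "Fract [:of_nat p powi (- e):] 1 * (Fract [:of_nat p powi e:] 1 * ratfun_of A B) = ratfun_of A B"
    and "Fract [:of_nat p powi (- e):] 1 * (Fract [:of_nat p powi e':] 1 * ratfun_of A' B')
      = ratfun_of (smult (int p ^ m) A') B'"
    using inv by (simp_all only: Fract_mult Fract_const_mult_ratfun_of) (simp add: One_fract_def one_pCons)
  with eq have "ratfun_of A B = ratfun_of (smult (int p ^ m) A') B'"
    by simp
  moreover have "B' \<noteq> 0"
    using B' by auto
  ultimately have "A * B' = smult (int p ^ m) (A' * B)"
    using \<open>B \<noteq> 0\<close> by (simp add: ratfun_of_eq_iff)
  moreover have "[:int p:] dvd smult (int p ^ m) (A' * B)"
    using \<open>\<not> e' \<le> e\<close> by (simp add: const_poly_dvd_iff m_def)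
  ultimately show False
    using A B' const_prime_dvd_mult_iff[OF p] by metis
qed

lemma vp_ratfun_Fract_mult:
  assumes p: "prime p" and A: "\<not> [:int p:] dvd A" and B: "\<not> [:int p:] dvd B"
  shows "vp_ratfun p (Fract [:of_nat p powi e:] 1 * ratfun_of A B) = ereal (of_int e)"
proof -
  have "A \<noteq> 0" "B \<noteq> 0"
    using A B by auto
  moreover have "(of_nat p :: rat) \<noteq> 0"
    using p by (simp add: prime_gt_0_nat)
  ultimately have "Fract [:of_nat p powi e:] 1 * ratfun_of A B \<noteq> 0"
    by (simp add: ratfun_of_def rat_poly_eq_0_iff Zero_fract_def eq_fract)
  moreover have "(THE e'. \<exists>A' B'. nonzero_mod p A' \<and> nonzero_mod p B' \<and>
      Fract [:of_nat p powi e:] 1 * ratfun_of A B = Fract [:of_nat p powi e':] 1 * ratfun_of A' B') = e"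
  proof (rule the_equality)
    fix e' assume "\<exists>A' B'. nonzero_mod p A' \<and> nonzero_mod p B' \<and>
      Fract [:of_nat p powi e:] 1 * ratfun_of A B = Fract [:of_nat p powi e':] 1 * ratfun_of A' B'"
    then obtain A' B' where A'B': "\<not> [:int p:] dvd A'" "\<not> [:int p:] dvd B'"
      and eq: "Fract [:of_nat p powi e:] 1 * ratfun_of A B = Fract [:of_nat p powi e':] 1 * ratfun_of A' B'"
      by (auto simp: nonzero_mod_iff)
    have "B' \<noteq> 0"
      using A'B' by auto
    show "e' = e"
      using p_power_representation_exponent_le[OF p A A'B'(2) \<open>B \<noteq> 0\<close> eq]
        p_power_representation_exponent_le[OF p A'B'(1) B \<open>B' \<noteq> 0\<close> eq[symmetric]] by simp
  qed (use A B in \<open>auto simp: nonzero_mod_iff\<close>)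
  ultimately show ?thesis
    by (simp add: vp_ratfun_def)
qed

lemma vp_ratfun_power_mult:
  assumes "prime p" "\<not> [:int p:] dvd A" "\<not> [:int p:] dvd B"
  shows "vp_ratfun p (of_nat p ^ w * ratfun_of A B) = ereal (of_nat w)"
proof -
  have "(of_nat p ^ w :: ratfun) = of_nat (p ^ w)"
    by simp
  also have "\<dots> = Fract [:of_nat p powi int w:] 1"
    by (simp only: of_nat_fract of_nat_poly) simp
  finally have "(of_nat p ^ w :: ratfun) = Fract [:of_nat p powi int w:] 1" .
  then show ?thesis
    using vp_ratfun_Fract_mult[OF assms, of "int w"] by simp
qed

lemma vp_ratfun_leading_term:
  assumes p: "prime p" and G: "p_divisible p (Suc v) (G - of_nat p ^ v * ratfun_of X Y)"
    and X: "\<not> [:int p:] dvd X" and Y: "\<not> [:int p:] dvd Y"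
  shows "vp_ratfun p G = ereal (of_nat v)"
proof -
  obtain X' Y' where Y': "\<not> [:int p:] dvd Y'"
    and "G - of_nat p ^ v * ratfun_of X Y = of_nat p ^ Suc v * ratfun_of X' Y'"
    using G unfolding p_divisible_def by blast
  moreover have "Y \<noteq> 0" "Y' \<noteq> 0"
    using Y Y' by auto
  moreover have "of_nat p ^ Suc v * ratfun_of X' Y' = of_nat p ^ v * ratfun_of (smult (int p) X') Y'"
    using of_int_mult_ratfun_of[of "int p" X' Y'] by simp
  ultimately have "G = of_nat p ^ v * ratfun_of X Y + of_nat p ^ v * ratfun_of (smult (int p) X') Y'"
    by (metis diff_eq_eq add.commute)
  also have "\<dots> = of_nat p ^ v * ratfun_of (X * Y' + smult (int p) X' * Y) (Y * Y')"
    using \<open>Y \<noteq> 0\<close> \<open>Y' \<noteq> 0\<close> by (simp add: ratfun_of_add flip: distrib_left)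
  finally have "G = of_nat p ^ v * ratfun_of (X * Y' + smult (int p) X' * Y) (Y * Y')" .
  moreover have "\<not> [:int p:] dvd X * Y' + smult (int p) X' * Y"
    using X Y' const_prime_dvd_mult_iff[OF p] by (simp add: dvd_add_left_iff const_dvd_smult)
  moreover have "\<not> [:int p:] dvd Y * Y'"
    using Y Y' const_prime_dvd_mult_iff[OF p] by simp
  ultimately show ?thesis
    using vp_ratfun_power_mult[OF p] by simp
qed

lemma multiplicity_decompose_int:
  assumes "prime p" "z \<noteq> 0"
  obtains z' where "z = int p ^ multiplicity (int p) z * z'" "\<not> int p dvd z'"
proof -
  have "\<not> is_unit (int p)"
    using prime_gt_1_nat[OF assms(1)] by simp
  then show thesis
    using multiplicity_decompose'[OF assms(2)] that by metis
qed

lemma rat_p_power_representation_exponent: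
  assumes p: "prime p" and ab: "\<not> int p dvd a" "\<not> int p dvd b" and "z \<noteq> 0"
    and eq: "(of_int z :: rat) = of_nat p powi e * (of_int a / of_int b)"
  shows "e = int (multiplicity (int p) z)"
proof -
  define m where "m = multiplicity (int p) z"
  obtain z' where z: "z = int p ^ m * z'" "\<not> int p dvd z'"
    using multiplicity_decompose_int[OF p \<open>z \<noteq> 0\<close>] unfolding m_def .
  have "b \<noteq> 0"
    using ab by auto
  show ?thesis
  proof (cases "0 \<le> e")
    case True
    then have "(of_int (z * b) :: rat) = of_int (int p ^ nat e * a)"
      using eq \<open>b \<noteq> 0\<close> by (simp add: field_simps power_int_def)
    then have "int p ^ m * (z' * b) = int p ^ nat e * a"
      unfolding of_int_eq_iff z by (simp add: mult.assoc)
    moreover have "\<not> int p dvd z' * b"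
      using z ab p by (simp add: prime_dvd_mult_iff)
    ultimately have "m = nat e"
      using multiplicity_decomposeI[of _ "int p"] ab p by (metis of_nat_eq_0_iff not_prime_0)
    then show ?thesis
      using True by (simp add: m_def)
  next
    case False
    then have "(of_int (z * b * int p ^ nat (- e)) :: rat) = of_int a"
      using eq \<open>b \<noteq> 0\<close> prime_gt_0_nat[OF p] by (simp add: field_simps power_int_def)
    then have "a = z * b * int p ^ nat (- e)"
      by (simp only: of_int_eq_iff)
    then have "int p dvd a"
      using False by (simp add: dvd_power)
    with ab show ?thesis
      by simp
  qed
qed

lemma vp_rat_of_int:
  assumes p: "prime p" and "z \<noteq> 0"
  shows "vp_rat p (of_int z) = ereal (of_nat (multiplicity (int p) z))"
proof -
  define m where "m = multiplicity (int p) z"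
  obtain z' where z: "z = int p ^ m * z'" "\<not> int p dvd z'"
    using multiplicity_decompose_int[OF p \<open>z \<noteq> 0\<close>] unfolding m_def .
  have "(THE e::int. \<exists>a b::int. \<not> int p dvd a \<and> \<not> int p dvd b \<and>
      (of_int z :: rat) = of_nat p powi e * (of_int a / of_int b)) = int m"
  proof (rule the_equality)
    show "\<exists>a b::int. \<not> int p dvd a \<and> \<not> int p dvd b \<and>
      (of_int z :: rat) = of_nat p powi int m * (of_int a / of_int b)"
      using z prime_gt_1_nat[OF p] by (intro exI[of _ z'] exI[of _ 1]) auto
  qed (use rat_p_power_representation_exponent[OF p _ _ \<open>z \<noteq> 0\<close>] in \<open>auto simp: m_def\<close>)
  then show ?thesis
    using \<open>z \<noteq> 0\<close> by (simp add: vp_rat_def m_def)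
qed

lemma vp_ratfun_of_int:
  assumes p: "prime p"
  shows "vp_ratfun p (of_int b) = vp_rat p (of_int b)"
proof (cases "b = 0")
  case False
  define m where "m = multiplicity (int p) b"
  obtain b' where b: "b = int p ^ m * b'" "\<not> int p dvd b'"
    using multiplicity_decompose_int[OF p False] unfolding m_def .
  have "(of_int b :: ratfun) = of_nat p ^ m * ratfun_of [:b':] 1"
    by (simp add: b of_int_ratfun[symmetric])
  moreover have "\<not> [:int p:] dvd [:b':]"
    using b(2) by simp
  ultimately show ?thesis
    using vp_ratfun_power_mult[OF p _ not_const_prime_dvd_1[OF p]] vp_rat_of_int[OF p False]
    by (simp add: m_def)
qed (simp add: vp_ratfun_def vp_rat_def)

lemma p_divisible_mono:
  assumes "w \<le> w'" "p_divisible p w' G"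
  shows "p_divisible p w G"
proof -
  obtain X Y where "\<not> [:int p:] dvd Y" "G = of_nat p ^ w' * ratfun_of X Y"
    using assms(2) unfolding p_divisible_def by blast
  moreover have "(of_nat p ^ w' :: ratfun) = of_nat p ^ w * of_nat p ^ (w' - w)"
    using assms(1) by (simp flip: power_add)
  ultimately have "\<not> [:int p:] dvd Y \<and> G = of_nat p ^ w * ratfun_of (smult (int p ^ (w' - w)) X) Y"
    by (simp add: mult.assoc of_nat_power_mult_ratfun_of)
  then show ?thesis
    unfolding p_divisible_def by blast
qed

lemma ratfun_of_add_numerator: "Y \<noteq> 0 \<Longrightarrow> ratfun_of (X + X') Y = ratfun_of X Y + ratfun_of X' Y"
  by (simp add: ratfun_of_add ratfun_of_eq_iff algebra_simps)

lemma p_divisible_of_leading_term: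
  assumes p: "prime p" and G: "p_divisible p (Suc v) (G - of_nat p ^ v * ratfun_of X Y)"
    and Y: "\<not> [:int p:] dvd Y"
  shows "p_divisible p v G"
proof -
  have "p_divisible p v (G - of_nat p ^ v * ratfun_of X Y)"
    using p_divisible_mono[OF _ G] by simp
  moreover have "p_divisible p v (of_nat p ^ v * ratfun_of X Y)"
    using Y unfolding p_divisible_def by blast
  ultimately show ?thesis
    using p_divisible_add[OF p] by fastforce
qed

lemma vp_ratfun_add_of_int:
  assumes p: "prime p" and G: "p_divisible p (Suc v) (G - of_nat p ^ v * ratfun_of X Y)"
    and Y: "\<not> [:int p:] dvd Y" and X: "\<And>c. \<not> [:int p:] dvd X + smult c Y"
  shows "vp_ratfun p (G + of_int b) = min (ereal (of_nat v)) (vp_rat p (of_int b))"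
proof (cases "b = 0")
  case True
  then show ?thesis
    using vp_ratfun_leading_term[OF p G _ Y] X[of 0] by (simp add: vp_rat_def)
next
  case False
  define m where "m = multiplicity (int p) b"
  obtain b' where b: "b = int p ^ m * b'" "\<not> int p dvd b'"
    using multiplicity_decompose_int[OF p False] unfolding m_def .
  have "Y \<noteq> 0"
    using Y by auto
  show ?thesis
  proof (cases "v \<le> m")
    case True
    define c where "c = int p ^ (m - v) * b'"
    have "ratfun_of (smult c Y) Y = of_int c"
      using \<open>Y \<noteq> 0\<close> by (simp add: of_int_ratfun ratfun_of_eq_iff)
    moreover have "(of_nat p ^ v * of_int c :: ratfun) = of_int b"
      using True by (simp add: b c_def mult.assoc flip: power_add)
    ultimately have "of_nat p ^ v * ratfun_of (X + smult c Y) Y = of_nat p ^ v * ratfun_of X Y + of_int b"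
      using \<open>Y \<noteq> 0\<close> by (simp add: ratfun_of_add_numerator distrib_left)
    then have "p_divisible p (Suc v) (G + of_int b - of_nat p ^ v * ratfun_of (X + smult c Y) Y)"
      using G by (simp add: algebra_simps)
    then show ?thesis
      using vp_ratfun_leading_term[OF p _ X Y] vp_rat_of_int[OF p False] True
      by (simp add: m_def)
  next
    case False
    then have "p_divisible p (Suc m) G"
      using p_divisible_mono p_divisible_of_leading_term[OF p G Y] by (metis not_less_eq_eq)
    then have "p_divisible p (Suc m) (G + of_int b - of_nat p ^ m * ratfun_of [:b':] 1)"
      by (simp add: b of_int_ratfun[symmetric])
    then show ?thesis
      using vp_ratfun_leading_term[OF p _ _ not_const_prime_dvd_1[OF p]] b(2)
        vp_rat_of_int[OF p \<open>b \<noteq> 0\<close>] False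
      by (simp add: m_def)
  qed
qed

lemma not_const_dvd_if_vp_ratfun_eq_0:
  assumes p: "prime p" and "Hm \<noteq> 0" and cop: "coprime Hp Hm"
    and v: "vp_ratfun p (ratfun_of Hp Hm) = 0"
  shows "\<not> [:int p:] dvd Hp \<and> \<not> [:int p:] dvd Hm"
proof -
  have "Hp \<noteq> 0"
    using v by (auto simp: vp_ratfun_def ratfun_of_0)
  have not_unit: "\<not> is_unit [:int p:]"
    using prime_gt_1_nat[OF p] by (simp add: is_unit_const_poly_iff)
  define s t where "s = multiplicity [:int p:] Hp" and "t = multiplicity [:int p:] Hm"
  obtain A B where A: "Hp = [:int p:] ^ s * A" "\<not> [:int p:] dvd A"
    and B: "Hm = [:int p:] ^ t * B" "\<not> [:int p:] dvd B"
    using multiplicity_decompose'[OF \<open>Hp \<noteq> 0\<close> not_unit] multiplicity_decompose'[OF \<open>Hm \<noteq> 0\<close> not_unit]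
    unfolding s_def t_def by metis
  have "(of_nat p :: rat) \<noteq> 0"
    using p by (simp add: prime_gt_0_nat)
  then have "(of_nat p ^ s :: rat) = of_nat p powi (int s - int t) * of_nat p ^ t"
    by (simp add: power_int_diff)
  moreover have "B \<noteq> 0"
    using B(2) by auto
  ultimately have "ratfun_of Hp Hm = Fract [:of_nat p powi (int s - int t):] 1 * ratfun_of A B"
    using \<open>(of_nat p :: rat) \<noteq> 0\<close>
    by (simp add: A B poly_const_pow ratfun_of_def rat_poly_smult eq_fract rat_poly_eq_0_iff mult.commute)
  then have "s = t"
    using v vp_ratfun_Fract_mult[OF p A(2) B(2)] by simp
  moreover have "s = 0 \<or> t = 0"
    using cop not_unit by (metis A(1) B(1) coprime_common_divisor dvd_mult2 dvd_power gr0I)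
  ultimately show ?thesis
    using A B by simp
qed

subsection \<open>The leading term of \<open>H\<^sup>+\<close>\<close>

lemma prod_diff_eq_p_power_mult:
  fixes h :: "nat \<Rightarrow> nat \<Rightarrow> int" and q :: "nat \<Rightarrow> int"
  assumes p: "prime p" and h: "\<forall>i\<in>{1..k}. h i 1 \<noteq> h i 0" and q: "\<forall>i\<in>{1..k}. \<not> int p dvd q i"
  obtains u where "(\<Prod>i=1..k. h i 0 * q i - h i 1 * q i)
      = int p ^ (\<Sum>i=1..k. multiplicity (int p) (h i 1 - h i 0)) * u" "\<not> int p dvd u"
proof -
  define m where "m i = multiplicity (int p) (h i 1 - h i 0)" for i
  define w where "w i = - ((h i 1 - h i 0) div int p ^ m i * q i)" for i
  have factor: "h i 0 * q i - h i 1 * q i = int p ^ m i * w i" for i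
  proof -
    have "h i 1 - h i 0 = int p ^ m i * ((h i 1 - h i 0) div int p ^ m i)"
      unfolding m_def by (simp add: multiplicity_dvd)
    then show ?thesis
      unfolding w_def by (metis minus_diff_eq left_diff_distrib minus_mult_right mult.assoc)
  qed
  have "\<not> int p dvd w i" if "i \<in> {1..k}" for i
  proof -
    have "\<not> int p dvd (h i 1 - h i 0) div int p ^ m i"
      unfolding m_def using h that prime_gt_1_nat[OF p] by (intro multiplicity_decompose) auto
    then show ?thesis
      using q that p by (simp add: w_def prime_dvd_mult_iff)
  qed
  moreover have "prime (int p)"
    using p by simp
  ultimately have "\<not> int p dvd (\<Prod>i=1..k. w i)"
    by (simp add: prime_dvd_prod_iff)
  moreover have "(\<Prod>i=1..k. h i 0 * q i - h i 1 * q i) = int p ^ (\<Sum>i=1..k. m i) * (\<Prod>i=1..k. w i)"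
    by (simp only: factor prod.distrib power_sum)
  ultimately show thesis
    using that[of "\<Prod>i=1..k. w i"] unfolding m_def by blast
qed

lemma iter_diff_op_leading_term:
  assumes p: "prime p" and E: "p_divisible p 1 (G - (ratfun_of X1 1 + ratfun_of X2 Y2))"
    and Y2: "\<not> [:int p:] dvd Y2" and c: "(\<Prod>i=1..k. s i 0 - s i 1) = int p ^ v * u" "\<not> int p dvd u"
  defines "P1 \<equiv> iter_diff_step s k (X1, 1)" and "P2 \<equiv> iter_diff_step s k (X2, Y2)"
  shows "p_divisible p (Suc v)
    (iter_diff_op s k G - of_nat p ^ v * ratfun_of (smult u (fst P1 * snd P2 + fst P2)) (snd P2))"
proof -
  define E0 where "E0 = G - (ratfun_of X1 1 + ratfun_of X2 Y2)"
  have "Y2 \<noteq> 0" "snd P1 = 1"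
    using Y2 by (auto simp: P1_def snd_iter_diff_step_1)
  then have "snd P2 \<noteq> 0"
    by (simp add: P2_def snd_iter_diff_step_eq_0_iff)
  have "G = ratfun_of X1 1 + ratfun_of X2 Y2 + E0"
    by (simp add: E0_def)
  then have "iter_diff_op s k G
      = iter_diff_op s k (ratfun_of X1 1) + iter_diff_op s k (ratfun_of X2 Y2) + iter_diff_op s k E0"
    by (simp only: iter_diff_op_add)
  also have "\<dots> = of_int (\<Prod>i=1..k. s i 0 - s i 1) * (ratfun_of_pair P1 + ratfun_of_pair P2)
      + iter_diff_op s k E0"
    using iter_diff_op_ratfun_of_pair[of "(X1, 1)" s k] iter_diff_op_ratfun_of_pair[of "(X2, Y2)" s k]
      \<open>Y2 \<noteq> 0\<close>
    by (simp add: P1_def P2_def distrib_left del: of_int_prod of_int_diff)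
  also have "of_int (\<Prod>i=1..k. s i 0 - s i 1) * (ratfun_of_pair P1 + ratfun_of_pair P2)
      = of_nat p ^ v * ratfun_of (smult u (fst P1 * snd P2 + fst P2)) (snd P2)"
    using \<open>snd P1 = 1\<close> \<open>snd P2 \<noteq> 0\<close>
    unfolding c by (simp add: ratfun_of_add mult.assoc flip: of_int_mult_ratfun_of)
  finally have "iter_diff_op s k G - of_nat p ^ v * ratfun_of (smult u (fst P1 * snd P2 + fst P2)) (snd P2)
      = iter_diff_op s k E0"
    by simp
  moreover have "multiplicity (int p) (\<Prod>i=1..k. s i 0 - s i 1) = v"
    using c p by (intro multiplicity_decomposeI) auto
  ultimately show ?thesis
    using p_divisible_iter_diff_op[OF p E[folded E0_def], of s k] by simp
qed

lemma not_const_dvd_leading_numerator: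
  assumes p: "prime p" and s: "\<forall>i\<in>{1..k}. s i 0 \<noteq> s i 1" and u: "\<not> int p dvd u"
    and polynomial: "X2 = 0 \<Longrightarrow> \<not> int p dvd lead_coeff X1 \<and> k \<le> degree X1 \<and> degree X1 < p
      \<and> (c = 0 \<or> k < degree X1)"
    and proper: "X2 \<noteq> 0 \<Longrightarrow> p_unit_lead_coeffs p (X2, Y2) \<and> degree X2 < degree Y2 \<and> degree Y2 + k \<le> p"
    and Y2: "\<not> [:int p:] dvd Y2"
  defines "P1 \<equiv> iter_diff_step s k (X1, 1)" and "P2 \<equiv> iter_diff_step s k (X2, Y2)"
  shows "\<not> [:int p:] dvd smult u (fst P1 * snd P2 + fst P2) + smult c (snd P2)"
proof -
  have split: "smult u (fst P1 * snd P2 + fst P2) + smult c (snd P2)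
      = (smult u (fst P1) + [:c:]) * snd P2 + smult u (fst P2)"
    by (simp add: algebra_simps smult_add_right)
  show ?thesis
  proof (cases "X2 = 0")
    case True
    then have "\<not> [:int p:] dvd smult u (fst P1) + [:c:]"
      using polynomial unfolding P1_def by (intro iter_diff_step_polynomial_not_dvd[OF p s _ _ _ u]) auto
    moreover have "fst P2 = 0"
      using True by (simp add: P2_def fst_iter_diff_step_0)
    moreover have "\<not> [:int p:] dvd snd P2"
      using not_const_dvd_snd_iter_diff_step[OF p, of "(X2, Y2)"] Y2 by (simp add: P2_def)
    ultimately show ?thesis
      unfolding split using const_prime_dvd_mult_iff[OF p] by simp
  next
    case False
    then have "\<not> [:int p:] dvd (smult u (fst P1) + [:c:]) * snd P2 + smult u (fst P2)"
      using proper unfolding P2_def by (intro iter_diff_step_proper_not_dvd[OF p s _ _ _ u]) auto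
    then show ?thesis
      unfolding split .
  qed
qed

lemma vp_ratfun_Hplus:
  fixes h :: "nat \<Rightarrow> nat \<Rightarrow> int" and q :: "nat \<Rightarrow> int"
  assumes p: "prime p" and "k \<ge> 1" and Hm: "\<not> [:int p:] dvd Hm"
    and deg: "k + deg_ratfun Hp Hm \<le> p" and q: "\<forall>i\<in>{1..k}. \<not> int p dvd q i"
    and h: "\<forall>i\<in>{1..k}. h i 1 \<noteq> h i 0" and poly: "reduces_to_poly p Hp Hm \<longrightarrow> k \<le> deg_p p Hp Hm"
  defines "v \<equiv> \<Sum>i=1..k. multiplicity (int p) (h i 1 - h i 0)"
  shows "vp_ratfun p (Hplus k q h Hp Hm) = ereal (of_nat v)"
    and "reduces_to_poly p Hp Hm \<longrightarrow> k < deg_p p Hp Hm \<Longrightarrow>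
      vp_ratfun p (Hplus k q h Hp Hm + of_int b) = min (ereal (of_nat v)) (vp_rat p (of_int b))"
proof -
  define s where "s = (\<lambda>i j. h i j * q i)"
  have s: "\<forall>i\<in>{1..k}. s i 0 \<noteq> s i 1"
    using h q by (auto simp: s_def)
  obtain X1 X2 Y2 where E: "p_divisible p 1 (ratfun_of Hp Hm - (ratfun_of X1 1 + ratfun_of X2 Y2))"
    and X1: "X1 = 0 \<or> \<not> int p dvd lead_coeff X1" "degree X1 \<le> degree Hp"
    and Y2: "\<not> int p dvd lead_coeff Y2" "degree Y2 \<le> degree Hm"
    and X2: "X2 = 0 \<or> \<not> int p dvd lead_coeff X2 \<and> degree X2 < degree Y2"
    and X2_0: "X2 = 0 \<Longrightarrow> reduces_to_poly p Hp Hm \<and> deg_p p Hp Hm = degree X1"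
    by (rule ratfun_mod_p_decomposition[OF p Hm, of Hp]) (rule that)
  obtain u where "(\<Prod>i=1..k. h i 0 * q i - h i 1 * q i) = int p ^ v * u" "\<not> int p dvd u"
    by (rule prod_diff_eq_p_power_mult[OF p h q, folded v_def]) (rule that)
  then have u: "(\<Prod>i=1..k. s i 0 - s i 1) = int p ^ v * u" "\<not> int p dvd u"
    by (simp_all add: s_def)
  define P1 where "P1 = iter_diff_step s k (X1, 1)"
  define P2 where "P2 = iter_diff_step s k (X2, Y2)"
  have "\<not> [:int p:] dvd Y2"
    using Y2(1) by (rule not_const_dvd_if_lead_coeff)
  then have Y: "\<not> [:int p:] dvd snd P2"
    using not_const_dvd_snd_iter_diff_step[OF p, of "(X2, Y2)"] by (simp add: P2_def)
  have "Hplus k q h Hp Hm = iter_diff_op s k (ratfun_of Hp Hm)"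
    using Hm Hplus_eq_iter_diff_op[of Hm k q h Hp] by (auto simp: s_def)
  then have approx: "p_divisible p (Suc v)
      (Hplus k q h Hp Hm - of_nat p ^ v * ratfun_of (smult u (fst P1 * snd P2 + fst P2)) (snd P2))"
    using iter_diff_op_leading_term[OF p E \<open>\<not> [:int p:] dvd Y2\<close> u] by (simp add: P1_def P2_def)
  have "degree Hp + k \<le> p" "degree Hm + k \<le> p"
    using deg by (auto simp: deg_ratfun_def)
  then have X: "\<not> [:int p:] dvd smult u (fst P1 * snd P2 + fst P2) + smult c (snd P2)"
    if "c = 0 \<or> (reduces_to_poly p Hp Hm \<longrightarrow> k < deg_p p Hp Hm)" for c
    unfolding P1_def P2_def using X1 X2 X2_0 Y2 that poly \<open>k \<ge> 1\<close>
    by (intro not_const_dvd_leading_numerator[OF p s u(2) _ _ \<open>\<not> [:int p:] dvd Y2\<close>])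
      (auto simp: p_unit_lead_coeffs_def)
  show "vp_ratfun p (Hplus k q h Hp Hm) = ereal (of_nat v)"
    using vp_ratfun_leading_term[OF p approx _ Y] X[of 0] by simp
  show "vp_ratfun p (Hplus k q h Hp Hm + of_int b) = min (ereal (of_nat v)) (vp_rat p (of_int b))"
    if "reduces_to_poly p Hp Hm \<longrightarrow> k < deg_p p Hp Hm"
    using vp_ratfun_add_of_int[OF p approx Y] X that by blast
qed

lemma Hplus_eq_0:
  assumes "Hm \<noteq> 0" "i \<in> {1..k}" "h i 1 = h i 0"
  shows "Hplus k q h Hp Hm = 0"
  using assms by (simp add: Hplus_eq_iter_diff_op iter_diff_op_eq_0)

lemma sum_vp_rat_of_int:
  assumes "prime p" "finite A"
  shows "(\<Sum>i\<in>A. vp_rat p (of_int (z i)))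
    = (if \<exists>i\<in>A. z i = 0 then \<infinity> else ereal (of_nat (\<Sum>i\<in>A. multiplicity (int p) (z i))))"
proof (cases "\<exists>i\<in>A. z i = 0")
  case False
  then have "(\<Sum>i\<in>A. vp_rat p (of_int (z i))) = (\<Sum>i\<in>A. ereal (of_nat (multiplicity (int p) (z i))))"
    by (intro sum.cong refl vp_rat_of_int[OF assms(1)]) auto
  with False show ?thesis
    by simp
qed (use assms(2) in \<open>auto simp: sum_Pinfty vp_rat_def\<close>)

theorem proposition5p1:
  fixes k p :: nat and q :: "nat \<Rightarrow> int" and h :: "nat \<Rightarrow> nat \<Rightarrow> int"
    and Hp Hm :: "int poly"
  assumes "k \<ge> 1"
    and "Hm \<noteq> 0" and "coprime Hp Hm"
    and "vp_ratfun p (ratfun_of Hp Hm) = 0"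
    and "prime p"
    and "p \<ge> k + deg_ratfun Hp Hm"
    and "\<not> int p dvd (\<Prod>i=1..k. q i)"
    and "reduces_to_poly p Hp Hm \<longrightarrow> deg_p p Hp Hm \<ge> k"
  shows "vp_ratfun p (Hplus k q h Hp Hm) = (\<Sum>i=1..k. vp_rat p (of_int (h i 1 - h i 0)))
    \<and> ((reduces_to_poly p Hp Hm \<longrightarrow> deg_p p Hp Hm > k) \<longrightarrow>
        (\<forall>b::int. vp_ratfun p (Hplus k q h Hp Hm + of_int b)
            = min (\<Sum>i=1..k. vp_rat p (of_int (h i 1 - h i 0))) (vp_rat p (of_int b))))"
proof -
  note p = \<open>prime p\<close>
  have Hm: "\<not> [:int p:] dvd Hm"
    using not_const_dvd_if_vp_ratfun_eq_0[OF p assms(2-4)] by blast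
  have q: "\<forall>i\<in>{1..k}. \<not> int p dvd q i"
    using assms(7) by (metis dvd_prodI dvd_trans finite_atLeastAtMost)
  have vp_h: "(\<Sum>i=1..k. vp_rat p (of_int (h i 1 - h i 0))) = (if \<exists>i\<in>{1..k}. h i 1 - h i 0 = 0 then \<infinity>
      else ereal (of_nat (\<Sum>i=1..k. multiplicity (int p) (h i 1 - h i 0))))"
    by (rule sum_vp_rat_of_int[OF p finite_atLeastAtMost])
  show ?thesis
  proof (cases "\<exists>i\<in>{1..k}. h i 1 = h i 0")
    case True
    then have "Hplus k q h Hp Hm = 0"
      using Hplus_eq_0[OF assms(2)] by blast
    moreover have "vp_ratfun p 0 = \<infinity>"
      by (simp add: vp_ratfun_def)
    ultimately show ?thesis
      unfolding vp_h using True by (simp add: vp_ratfun_of_int[OF p])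
  next
    case False
    then show ?thesis
      unfolding vp_h using vp_ratfun_Hplus[OF p assms(1) Hm assms(6) q _ assms(8)] by auto
  qed
qed

end
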